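(* Assume that $a(\cdot)\in B^q_\theta$ for $0<\theta\leq\frac{\pi}{2}$ and let $F\in\mathcal{L}(D(\mathbb{A}),X)$ be $p$-admissible for $\mathbb{A}$, with admissibility constant $\gamma=\gamma(\alpha)$, i.e. $\int_0^\alpha\|F\mathbb{T}(t)x\|^p\,dt\le\gamma^p\|x\|^p$ for $x\in D(\mathbb{A})$. Then \begin{align*} \int^\alpha_0 \left\|\mathscr{P}\mathscr{T}(t)\begin{pmatrix} x\\ f\end{pmatrix}\right\|^p dt\le 2^{p-1}\left( \|a\|_{B_{\theta}^q}^p\gamma^p \|x\|^p_X+\int^\alpha_0\|f(t)\|^p dt\right) \end{align*} for all $\alpha>0$ and $\begin{pmatrix} x\\ f\end{pmatrix}\in D(\mathscr{A})$.
   Context: $X$ is a Banach space, $p\in(1,\infty)$, $q\in(1,\infty)$, and $\mathbb{A}:D(\mathbb{A})\subset X\to X$ generates a $C_0$-semigroup $\mathbb{T}=(\mathbb{T}(t))_{t\ge0}$ on $X$; $a$ is a scalar function. For $0<\theta\le\pi/2$, $\Sigma_\theta=\{\lambda\in\mathbb{C}:|\arg\lambda|<\theta\}$ and $B^q_{\theta,X}$ is the Bergman space of holomorphic $f:\Sigma_\theta\to X$ with $\|f\|_{B^q_{\theta,X}}=(\int_{\Sigma_\theta}\|f(\tau+i\sigma)\|_X^q\,d\tau\,d\sigma)^{1/q}<\infty$; $B^q_\theta:=B^q_{\theta,\mathbb{C}}$. The state space is $\mathscr{X}^q=X\times B^q_{\theta,X}$ with norm $\|x\|_X+\|f\|_{B^q_{\theta,X}}$.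 $\Upsilon x:=a(\cdot)Fx$ for $x\in D(\mathbb{A})$. $\mathscr{A}=\mathrm{diag}(\mathbb{A},\frac{d}{dz})$ with $D(\mathscr{A})=D(\mathbb{A})\times D(\frac{d}{dz})$, generating $\mathscr{T}(t)=\mathrm{diag}(\mathbb{T}(t),\mathbb{S}(t))$ where $(\mathbb{S}(t)f)(s)=f(t+s)$ is the left shift semigroup; $\mathscr{P}=\begin{pmatrix}0&\delta_0\\ \Upsilon&0\end{pmatrix}$ with $D(\mathscr{P})=D(\mathscr{A})$, $\delta_0 f=f(0)$. *)

theory Defs
  imports "HOL-Analysis.Analysis"
begin

class complex_normed_space = real_normed_vector +
  fixes scaleC :: "complex \<Rightarrow> 'a \<Rightarrow> 'a" (infixr "*\<^sub>C" 75)
  assumes scaleC_add_right: "scaleC c (x + y) = scaleC c x + scaleC c y"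
    and scaleC_add_left: "scaleC (c + d) x = scaleC c x + scaleC d x"
    and scaleC_scaleC: "scaleC c (scaleC d x) = scaleC (c * d) x"
    and scaleC_one: "scaleC 1 x = x"
    and scaleC_of_real: "scaleC (complex_of_real r) x = r *\<^sub>R x"
    and norm_scaleC: "norm (scaleC c x) = cmod c * norm x"

definition c0_semigroup :: "(real \<Rightarrow> 'x::real_normed_vector \<Rightarrow> 'x) \<Rightarrow> bool" where
  "c0_semigroup T \<longleftrightarrow>
     (\<forall>t\<ge>0. bounded_linear (T t)) \<and> T 0 = id \<and>
     (\<forall>t s. t \<ge> 0 \<longrightarrow> s \<ge> 0 \<longrightarrow> T (t + s) = T t \<circ> T s) \<and>
     (\<forall>x. ((\<lambda>t. T t x) \<longlongrightarrow> x) (at_right 0))"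

definition gen_dom :: "(real \<Rightarrow> 'x::real_normed_vector \<Rightarrow> 'x) \<Rightarrow> 'x set" where
  "gen_dom T = {x. \<exists>y. ((\<lambda>h. (1 / h) *\<^sub>R (T h x - x)) \<longlongrightarrow> y) (at_right 0)}"

definition gen :: "(real \<Rightarrow> 'x::real_normed_vector \<Rightarrow> 'x) \<Rightarrow> 'x \<Rightarrow> 'x" where
  "gen T x = Lim (at_right 0) (\<lambda>h. (1 / h) *\<^sub>R (T h x - x))"

text \<open>F \<in> L(D(A),X): complex-linear on D(A), bounded for the graph norm of A.\<close>
definition bounded_on_graph ::
  "(real \<Rightarrow> 'x::complex_normed_space \<Rightarrow> 'x) \<Rightarrow> ('x \<Rightarrow> 'x) \<Rightarrow> bool" where
  "bounded_on_graph T F \<longleftrightarrow>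
     (\<forall>x\<in>gen_dom T. \<forall>y\<in>gen_dom T. F (x + y) = F x + F y) \<and>
     (\<forall>c. \<forall>x\<in>gen_dom T. F (c *\<^sub>C x) = c *\<^sub>C F x) \<and>
     (\<exists>C. \<forall>x\<in>gen_dom T. norm (F x) \<le> C * (norm x + norm (gen T x)))"

text \<open>Sector \<Sigma>_\<theta> = {\<lambda>. |arg \<lambda>| < \<theta>} (0 excluded, arg undefined there).\<close>
definition sector :: "real \<Rightarrow> complex set" where
  "sector \<theta> = {z. z \<noteq> 0 \<and> \<bar>Arg z\<bar> < \<theta>}"

definition vholomorphic_on :: "(complex \<Rightarrow> 'x::complex_normed_space) \<Rightarrow> complex set \<Rightarrow> bool" where
  "vholomorphic_on f S \<longleftrightarrow>
     (\<forall>z\<in>S. \<exists>f'. (f has_derivative (\<lambda>h. h *\<^sub>C f')) (at z))"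

definition bergman_integral :: "real \<Rightarrow> real \<Rightarrow> (complex \<Rightarrow> 'x::real_normed_vector) \<Rightarrow> ennreal" where
  "bergman_integral q \<theta> f = (\<integral>\<^sup>+ z\<in>sector \<theta>. ennreal (norm (f z) powr q) \<partial>lborel)"

definition bergman_norm :: "real \<Rightarrow> real \<Rightarrow> (complex \<Rightarrow> 'x::real_normed_vector) \<Rightarrow> real" where
  "bergman_norm q \<theta> f = enn2real (bergman_integral q \<theta> f) powr (1 / q)"

definition bergmanX :: "real \<Rightarrow> real \<Rightarrow> (complex \<Rightarrow> 'x::complex_normed_space) set" where
  "bergmanX q \<theta> = {f. vholomorphic_on f (sector \<theta>) \<and> bergman_integral q \<theta> f < \<infinity>}"

definition bergman :: "real \<Rightarrow> real \<Rightarrow> (complex \<Rightarrow> complex) set" where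
  "bergman q \<theta> = {f. f holomorphic_on (sector \<theta>) \<and> bergman_integral q \<theta> f < \<infinity>}"

definition shift :: "real \<Rightarrow> (complex \<Rightarrow> 'x) \<Rightarrow> complex \<Rightarrow> 'x" where
  "shift t f = (\<lambda>s. f (complex_of_real t + s))"

text \<open>D(d/dz): domain of the generator of the left shift semigroup on B^q_{\<theta>,X}.\<close>
definition ddz_dom :: "real \<Rightarrow> real \<Rightarrow> (complex \<Rightarrow> 'x::complex_normed_space) set" where
  "ddz_dom q \<theta> = {f \<in> bergmanX q \<theta>. \<exists>g \<in> bergmanX q \<theta>.
      ((\<lambda>h. bergman_norm q \<theta> (\<lambda>s. (1 / h) *\<^sub>R (shift h f s - f s) - g s)) \<longlongrightarrow> 0) (at_right 0)}"

definition state_norm :: "real \<Rightarrow> real \<Rightarrow> 'x::real_normed_vector \<times> (complex \<Rightarrow> 'x) \<Rightarrow> real" where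
  "state_norm q \<theta> v = norm (fst v) + bergman_norm q \<theta> (snd v)"

definition delta0 :: "(complex \<Rightarrow> 'x) \<Rightarrow> 'x" where
  "delta0 f = f 0"

definition Upsilon :: "(complex \<Rightarrow> complex) \<Rightarrow> ('x::complex_normed_space \<Rightarrow> 'x) \<Rightarrow> 'x \<Rightarrow> complex \<Rightarrow> 'x" where
  "Upsilon a F x = (\<lambda>z. a z *\<^sub>C F x)"

definition opT :: "(real \<Rightarrow> 'x \<Rightarrow> 'x) \<Rightarrow> real \<Rightarrow> 'x \<times> (complex \<Rightarrow> 'x) \<Rightarrow> 'x \<times> (complex \<Rightarrow> 'x)" where
  "opT T t v = (T t (fst v), shift t (snd v))"

definition opP :: "(complex \<Rightarrow> complex) \<Rightarrow> ('x::complex_normed_space \<Rightarrow> 'x) \<Rightarrow>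
    'x \<times> (complex \<Rightarrow> 'x) \<Rightarrow> 'x \<times> (complex \<Rightarrow> 'x)" where
  "opP a F v = (delta0 (snd v), Upsilon a F (fst v))"

end

(* Since P T(t) (x, f) = (f(t), a(.) F T(t) x) and the Bergman norm of a(.) y is
   norm y * norm a, the state norm of P T(t) (x, f) is norm (f t) + norm a * norm (F T(t) x).
   Convexity of s powr p gives (u + w) powr p <= 2 powr (p - 1) * (u powr p + w powr p);
   integrating over [0, alpha] and applying admissibility to the second term gives the bound.
   As F is unbounded on X, t -> F T(t) x need not be measurable, so the integrals are lower
   integrals; these are still subadditive when one summand is measurable, which holds for
   t -> norm (f t) because f is holomorphic, hence continuous, on the positive half-axis. *)

theory Submission
  imports Defs
begin

lemma powr_add_le:
  fixes u w p :: real
  assumes "0 \<le> u" "0 \<le> w" "1 \<le> p"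
  shows "(u + w) powr p \<le> 2 powr (p - 1) * (u powr p + w powr p)"
proof (cases "u = 0 \<or> w = 0")
  case True
  have "1 \<le> (2::real) powr (p - 1)"
    using assms by (simp add: ge_one_powr_ge_zero)
  then have "y \<le> 2 powr (p - 1) * y" if "0 \<le> y" for y :: real
    using that mult_right_mono by fastforce
  then show ?thesis
    using True assms by auto
next
  case False
  then have "0 < u" "0 < w"
    using assms by auto
  then have "((1/2) * u + (1 - 1/2) * w) powr p \<le> (1/2) * u powr p + (1 - 1/2) * w powr p"
    using convex_onD[OF powr_convex[OF assms(3)], of "1/2" u w] by auto
  then have "(u + w) powr p / 2 powr p \<le> (u powr p + w powr p) / 2"
    using assms by (simp add: powr_divide field_simps)
  then show ?thesis
    by (simp add: powr_diff field_simps)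
qed

lemma nn_integral_cmult_ge: "c * integral\<^sup>N M f \<le> (\<integral>\<^sup>+ x. c * f x \<partial>M)"
proof -
  have "c * integral\<^sup>N M f = (SUP g \<in> {g. simple_function M g \<and> g \<le> f}. c * integral\<^sup>S M g)"
    unfolding nn_integral_def by (rule SUP_mult_left_ennreal)
  also have "\<dots> \<le> (\<integral>\<^sup>+ x. c * f x \<partial>M)"
  proof (rule SUP_least)
    fix g assume g: "g \<in> {g. simple_function M g \<and> g \<le> f}"
    then have "c * integral\<^sup>S M g = (\<integral>\<^sup>+ x. c * g x \<partial>M)"
      by (subst nn_integral_eq_simple_integral) auto
    also have "\<dots> \<le> (\<integral>\<^sup>+ x. c * f x \<partial>M)"
      using g by (intro nn_integral_mono) (auto simp: le_fun_def intro: mult_left_mono)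
    finally show "c * integral\<^sup>S M g \<le> (\<integral>\<^sup>+ x. c * f x \<partial>M)" .
  qed
  finally show ?thesis .
qed

text \<open>No measurability of \<open>f\<close> is needed: for finite nonzero \<open>c\<close> the reverse inequality
  is \<open>nn_integral_cmult_ge\<close> applied to \<open>inverse c\<close>.\<close>

lemma nn_integral_cmult_finite:
  fixes c :: ennreal
  assumes "c < \<infinity>"
  shows "(\<integral>\<^sup>+ x. c * f x \<partial>M) = c * integral\<^sup>N M f"
proof (cases "c = 0")
  case True
  then show ?thesis by simp
next
  case False
  have "c / c = 1"
    using False assms by (intro ennreal_divide_self) auto
  then have inv: "inverse c * c = 1"
    by (simp add: divide_ennreal_def mult.commute)
  have "inverse c * (\<integral>\<^sup>+ x. c * f x \<partial>M) \<le> (\<integral>\<^sup>+ x. inverse c * (c * f x) \<partial>M)"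
    by (rule nn_integral_cmult_ge)
  also have "\<dots> = integral\<^sup>N M f"
    using inv by (simp add: mult.assoc[symmetric])
  finally have "c * (inverse c * (\<integral>\<^sup>+ x. c * f x \<partial>M)) \<le> c * integral\<^sup>N M f"
    by (rule mult_left_mono) simp
  then have "(\<integral>\<^sup>+ x. c * f x \<partial>M) \<le> c * integral\<^sup>N M f"
    using inv by (simp add: mult.assoc[symmetric] mult.commute[of c "inverse c"])
  then show ?thesis
    using nn_integral_cmult_ge[of c M f] by (rule antisym)
qed

text \<open>Only \<open>u\<close> has to be measurable: a simple minorant \<open>s\<close> of \<open>u + v\<close> splits into
  \<open>min s u\<close> and a measurable remainder below \<open>v\<close>.\<close>

lemma nn_integral_add_le:
  assumes u: "u \<in> borel_measurable M"
  shows "(\<integral>\<^sup>+ x. u x + v x \<partial>M) \<le> integral\<^sup>N M u + integral\<^sup>N M v"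
  unfolding nn_integral_def[of M "\<lambda>x. u x + v x"]
proof (rule SUP_least)
  fix s assume s: "s \<in> {g. simple_function M g \<and> g \<le> (\<lambda>x. u x + v x)}"
  then have s_meas: "s \<in> borel_measurable M"
    by (auto intro: borel_measurable_simple_function)
  define w where "w x = (if u x = top then 0 else s x - u x)" for x
  have w_meas: "w \<in> borel_measurable M"
    unfolding w_def using s_meas u by measurable
  have split: "s x = min (s x) (u x) + w x" for x
  proof (cases "s x \<le> u x")
    case True
    then show ?thesis
      by (cases "u x = top")
        (auto simp: w_def less_top intro!: diff_eq_0_ennreal le_less_trans[OF True])
  next
    case False
    then show ?thesis
      by (auto simp: w_def add_diff_inverse_ennreal)
  qed
  have "integral\<^sup>S M s = integral\<^sup>N M s"
    using s by (subst nn_integral_eq_simple_integral) auto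
  also have "\<dots> = (\<integral>\<^sup>+ x. min (s x) (u x) + w x \<partial>M)"
    using split by simp
  also have "\<dots> = (\<integral>\<^sup>+ x. min (s x) (u x) \<partial>M) + (\<integral>\<^sup>+ x. w x \<partial>M)"
    using s_meas u w_meas by (intro nn_integral_add) auto
  also have "\<dots> \<le> integral\<^sup>N M u + integral\<^sup>N M v"
  proof (intro add_mono nn_integral_mono)
    fix x
    show "min (s x) (u x) \<le> u x" by simp
    have "s x \<le> u x + v x"
      using s by (auto simp: le_fun_def)
    then show "w x \<le> v x"
      by (auto simp: w_def ennreal_minus_le_iff)
  qed
  finally show "integral\<^sup>S M s \<le> integral\<^sup>N M u + integral\<^sup>N M v" .
qed

lemma nn_integral_powr_add_le:
  fixes u w :: "'a \<Rightarrow> real"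
  assumes u_meas: "u \<in> borel_measurable M"
    and nonneg: "\<And>x. 0 \<le> u x" "\<And>x. 0 \<le> w x" and p: "1 \<le> p"
  shows "(\<integral>\<^sup>+ x. ennreal ((u x + w x) powr p) \<partial>M)
    \<le> ennreal (2 powr (p - 1)) * ((\<integral>\<^sup>+ x. ennreal (u x powr p) \<partial>M) + (\<integral>\<^sup>+ x. ennreal (w x powr p) \<partial>M))"
proof -
  have "(\<integral>\<^sup>+ x. ennreal ((u x + w x) powr p) \<partial>M)
      \<le> (\<integral>\<^sup>+ x. ennreal (2 powr (p - 1)) * (ennreal (u x powr p) + ennreal (w x powr p)) \<partial>M)"
  proof (rule nn_integral_mono)
    fix x
    have "ennreal ((u x + w x) powr p) \<le> ennreal (2 powr (p - 1) * (u x powr p + w x powr p))"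
      using nonneg p by (intro ennreal_leI powr_add_le) auto
    then show "ennreal ((u x + w x) powr p)
        \<le> ennreal (2 powr (p - 1)) * (ennreal (u x powr p) + ennreal (w x powr p))"
      by (simp add: ennreal_mult ennreal_plus)
  qed
  also have "\<dots> = ennreal (2 powr (p - 1)) * (\<integral>\<^sup>+ x. ennreal (u x powr p) + ennreal (w x powr p) \<partial>M)"
    by (simp add: nn_integral_cmult_finite)
  also have "\<dots> \<le> ennreal (2 powr (p - 1)) * ((\<integral>\<^sup>+ x. ennreal (u x powr p) \<partial>M) + (\<integral>\<^sup>+ x. ennreal (w x powr p) \<partial>M))"
    using u_meas by (intro mult_left_mono nn_integral_add_le) auto
  finally show ?thesis .
qed

lemma borel_measurable_restrict_Icc_if_continuous_on_Ioc:
  fixes g :: "real \<Rightarrow> 'b::topological_space"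
  assumes "a \<le> b" and "continuous_on {a<..b} g"
  shows "g \<in> borel_measurable (restrict_space lborel {a..b})"
proof (rule measurable_restrict_countable[of "{a}"])
  have "restrict_space (restrict_space lborel {a..b}) (- {a}) = restrict_space lborel {a<..b}"
    by (subst restrict_restrict_space) (auto intro!: arg_cong[where f = "restrict_space lborel"])
  moreover have "g \<in> borel_measurable (restrict_space borel {a<..b})"
    using assms(2) by (rule borel_measurable_continuous_on_restrict)
  moreover have "sets (restrict_space lborel {a<..b}) = sets (restrict_space borel {a<..b})"
    by (simp add: sets_restrict_space)
  ultimately show "g \<in> borel_measurable (restrict_space (restrict_space lborel {a..b}) (- {a}))"
    using measurable_cong_sets by metis
qed (use assms(1) in \<open>auto simp: sets_restrict_space intro!: image_eqI[where x = "{a}"]\<close>)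

lemma vholomorphic_on_imp_continuous_on:
  "vholomorphic_on f S \<Longrightarrow> continuous_on S f"
  unfolding vholomorphic_on_def
  by (meson continuous_at_imp_continuous_on has_derivative_continuous)

lemma of_real_in_sector: "0 < \<theta> \<Longrightarrow> 0 < t \<Longrightarrow> complex_of_real t \<in> sector \<theta>"
  by (simp add: sector_def)

lemma continuous_on_ddz_dom_positive_reals:
  assumes "f \<in> ddz_dom q \<theta>" and "0 < \<theta>"
  shows "continuous_on {0<..} (\<lambda>t. f (complex_of_real t))"
proof (rule continuous_on_compose2[of "sector \<theta>" f])
  show "continuous_on (sector \<theta>) f"
    using assms(1) unfolding ddz_dom_def bergmanX_def
    by (blast intro: vholomorphic_on_imp_continuous_on)
  show "continuous_on {0<..} complex_of_real"
    by (rule continuous_on_of_real_id)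
  show "complex_of_real ` {0<..} \<subseteq> sector \<theta>"
    using assms(2) of_real_in_sector by auto
qed

lemma bergman_norm_scaleC:
  fixes a :: "complex \<Rightarrow> complex" and y :: "'x::complex_normed_space"
  assumes "0 < q"
  shows "bergman_norm q \<theta> (\<lambda>z. a z *\<^sub>C y) = norm y * bergman_norm q \<theta> a"
proof -
  have "bergman_integral q \<theta> (\<lambda>z. a z *\<^sub>C y)
      = (\<integral>\<^sup>+ z. ennreal (norm y powr q) * (ennreal (norm (a z) powr q) * indicator (sector \<theta>) z) \<partial>lborel)"
    unfolding bergman_integral_def
    by (intro nn_integral_cong) (simp add: norm_scaleC powr_mult ennreal_mult' mult_ac)
  also have "\<dots> = ennreal (norm y powr q) * bergman_integral q \<theta> a"
    unfolding bergman_integral_def by (simp add: nn_integral_cmult_finite)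
  finally show ?thesis
    using assms unfolding bergman_norm_def by (simp add: enn2real_mult powr_mult powr_powr)
qed

lemma state_norm_opP_opT:
  assumes "0 < q"
  shows "state_norm q \<theta> (opP a F (opT T t (x, f)))
    = norm (f (complex_of_real t)) + bergman_norm q \<theta> a * norm (F (T t x))"
  using assms
  by (simp add: state_norm_def opP_def opT_def delta0_def shift_def Upsilon_def bergman_norm_scaleC)

theorem lemma3p4:
  fixes T :: "real \<Rightarrow> 'x::{complex_normed_space, complete_space} \<Rightarrow> 'x"
    and F :: "'x \<Rightarrow> 'x"
    and a :: "complex \<Rightarrow> complex"
    and p q \<theta> :: real
    and \<gamma> :: "real \<Rightarrow> real"
  assumes p: "1 < p" and q: "1 < q"
    and \<theta>: "0 < \<theta>" "\<theta> \<le> pi / 2"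
    and T: "c0_semigroup T"
    and a: "a \<in> bergman q \<theta>"
    and F: "bounded_on_graph T F"
    and \<gamma>_nonneg: "\<And>\<alpha>. 0 < \<alpha> \<Longrightarrow> 0 \<le> \<gamma> \<alpha>"
    and adm: "\<And>\<alpha> x. 0 < \<alpha> \<Longrightarrow> x \<in> gen_dom T \<Longrightarrow>
       (\<integral>\<^sup>+ t\<in>{0..\<alpha>}. ennreal (norm (F (T t x)) powr p) \<partial>lborel)
         \<le> ennreal (\<gamma> \<alpha> powr p * norm x powr p)"
  shows "\<forall>\<alpha>>0. \<forall>x f. x \<in> gen_dom T \<longrightarrow> f \<in> ddz_dom q \<theta> \<longrightarrow>
     (\<integral>\<^sup>+ t\<in>{0..\<alpha>}. ennreal (state_norm q \<theta> (opP a F (opT T t (x, f))) powr p) \<partial>lborel)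
       \<le> ennreal (2 powr (p - 1)) *
          (ennreal (bergman_norm q \<theta> a powr p * \<gamma> \<alpha> powr p * norm x powr p)
           + (\<integral>\<^sup>+ t\<in>{0..\<alpha>}. ennreal (norm (f (complex_of_real t)) powr p) \<partial>lborel))"
proof (intro allI impI)
  fix \<alpha> :: real and x :: 'x and f :: "complex \<Rightarrow> 'x"
  assume \<alpha>: "\<alpha> > 0" and x: "x \<in> gen_dom T" and f: "f \<in> ddz_dom q \<theta>"
  let ?M = "restrict_space lborel {0..\<alpha>}" and ?K = "ennreal (2 powr (p - 1))"
  define B where "B = bergman_norm q \<theta> a"
  have B: "0 \<le> B"
    by (simp add: B_def bergman_norm_def)
  have f_meas: "(\<lambda>t. norm (f (complex_of_real t))) \<in> borel_measurable ?M"
    using \<alpha> continuous_on_ddz_dom_positive_reals[OF f \<theta>(1)]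
    by (intro borel_measurable_restrict_Icc_if_continuous_on_Ioc continuous_on_norm)
      (auto elim: continuous_on_subset)
  have "(\<integral>\<^sup>+ t\<in>{0..\<alpha>}. ennreal (state_norm q \<theta> (opP a F (opT T t (x, f))) powr p) \<partial>lborel)
      = (\<integral>\<^sup>+ t. ennreal ((norm (f (complex_of_real t)) + B * norm (F (T t x))) powr p) \<partial>?M)"
    using q by (simp add: nn_integral_restrict_space state_norm_opP_opT B_def)
  also have "\<dots> \<le> ?K * ((\<integral>\<^sup>+ t. ennreal (norm (f (complex_of_real t)) powr p) \<partial>?M)
      + (\<integral>\<^sup>+ t. ennreal ((B * norm (F (T t x))) powr p) \<partial>?M))"
    using f_meas p B by (intro nn_integral_powr_add_le) auto
  also have "\<dots> = ?K * ((\<integral>\<^sup>+ t. ennreal (norm (f (complex_of_real t)) powr p) \<partial>?M)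
      + ennreal (B powr p) * (\<integral>\<^sup>+ t. ennreal (norm (F (T t x)) powr p) \<partial>?M))"
    using B by (simp add: powr_mult ennreal_mult nn_integral_cmult_finite)
  also have "\<dots> \<le> ?K * ((\<integral>\<^sup>+ t. ennreal (norm (f (complex_of_real t)) powr p) \<partial>?M)
      + ennreal (B powr p) * ennreal (\<gamma> \<alpha> powr p * norm x powr p))"
    using adm[OF \<alpha> x] by (intro mult_left_mono add_left_mono) (simp_all add: nn_integral_restrict_space)
  also have "\<dots> = ?K * (ennreal (B powr p * \<gamma> \<alpha> powr p * norm x powr p)
      + (\<integral>\<^sup>+ t\<in>{0..\<alpha>}. ennreal (norm (f (complex_of_real t)) powr p) \<partial>lborel))"
    by (simp add: nn_integral_restrict_space ennreal_mult mult.assoc add.commute)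
  finally show "(\<integral>\<^sup>+ t\<in>{0..\<alpha>}. ennreal (state_norm q \<theta> (opP a F (opT T t (x, f))) powr p) \<partial>lborel)
      \<le> ?K * (ennreal (bergman_norm q \<theta> a powr p * \<gamma> \<alpha> powr p * norm x powr p)
        + (\<integral>\<^sup>+ t\<in>{0..\<alpha>}. ennreal (norm (f (complex_of_real t)) powr p) \<partial>lborel))"
    unfolding B_def .
qed

end
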